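(* Let $G$ be an upward planar digraph with maximum in- and outdegree at most two, and let $e=(u,v)$ be a transitive edge of $G$, i.e., there exists a directed path from $u$ to $v$ in $G$ different from $e$. Then $e$ is a bad edge in every upward planar embedding of $G$.
   Context: A planar drawing of a digraph is upward if every edge $(u,v)$ is drawn as a curve strictly increasing in $y$ from $u$ to $v$; an upward planar embedding is the equivalence class of upward planar drawings with the same left-to-right orderings of incoming edges and of outgoing edges around each vertex. If a vertex has two incoming (outgoing) edges, these are its left and right incoming (outgoing) edges according to the embedding. An edge $e=(u,v)$ is a bad edge if it is the left outgoing edge of $u$ and the left incoming edge of $v$, or the right outgoing edge of $u$ and the right incoming edge of $v$. *)

theory Defs
  imports "HOL-Analysis.Analysis"
begin

definition outdeg :: "('v \<times> 'v) set \<Rightarrow> 'v \<Rightarrow> nat" where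
  "outdeg E x = card {w. (x, w) \<in> E}"

definition indeg :: "('v \<times> 'v) set \<Rightarrow> 'v \<Rightarrow> nat" where
  "indeg E x = card {w. (w, x) \<in> E}"

definition is_dpath :: "'v set \<Rightarrow> ('v \<times> 'v) set \<Rightarrow> 'v list \<Rightarrow> 'v \<Rightarrow> 'v \<Rightarrow> bool" where
  "is_dpath V E p a b \<longleftrightarrow> p \<noteq> [] \<and> hd p = a \<and> last p = b \<and> distinct p \<and> set p \<subseteq> V \<and>
     (\<forall>i. Suc i < length p \<longrightarrow> (p ! i, p ! Suc i) \<in> E)"

definition upward_planar_drawing ::
  "'v set \<Rightarrow> ('v \<times> 'v) set \<Rightarrow> ('v \<Rightarrow> real \<times> real) \<Rightarrow> ('v \<times> 'v \<Rightarrow> real \<Rightarrow> real \<times> real) \<Rightarrow> bool" where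
  "upward_planar_drawing V E pos crv \<longleftrightarrow>
     inj_on pos V \<and>
     (\<forall>(a, b)\<in>E. path (crv (a, b)) \<and> pathstart (crv (a, b)) = pos a \<and>
        pathfinish (crv (a, b)) = pos b \<and> strict_mono_on {0..1} (\<lambda>t. snd (crv (a, b) t))) \<and>
     (\<forall>e\<in>E. \<forall>t\<in>{0<..<1}. crv e t \<notin> pos ` V) \<and>
     (\<forall>e\<in>E. \<forall>e'\<in>E. e \<noteq> e' \<longrightarrow> (\<forall>s\<in>{0..1}. \<forall>t\<in>{0..1}. crv e s = crv e' t \<longrightarrow>
        (\<exists>w\<in>{fst e, snd e} \<inter> {fst e', snd e'}. crv e s = pos w)))"

definition upward_planar :: "'v set \<Rightarrow> ('v \<times> 'v) set \<Rightarrow> bool" where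
  "upward_planar V E \<longleftrightarrow> finite V \<and> E \<subseteq> V \<times> V \<and> (\<exists>pos crv. upward_planar_drawing V E pos crv)"

text \<open>Left-to-right order of two outgoing edges e1, e2 of u: just above u, at every
  common height, e1 lies strictly to the left of e2.\<close>

definition out_left_of ::
  "('v \<Rightarrow> real \<times> real) \<Rightarrow> ('v \<times> 'v \<Rightarrow> real \<Rightarrow> real \<times> real) \<Rightarrow> 'v \<Rightarrow> 'v \<times> 'v \<Rightarrow> 'v \<times> 'v \<Rightarrow> bool" where
  "out_left_of pos crv u e1 e2 \<longleftrightarrow> (\<exists>\<delta>>0. \<forall>s\<in>{0<..1}. \<forall>t\<in>{0<..1}.
     snd (crv e1 s) = snd (crv e2 t) \<and> snd (crv e1 s) < snd (pos u) + \<delta> \<longrightarrow>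
     fst (crv e1 s) < fst (crv e2 t))"

text \<open>Left-to-right order of two incoming edges e1, e2 of v: just below v.\<close>

definition in_left_of ::
  "('v \<Rightarrow> real \<times> real) \<Rightarrow> ('v \<times> 'v \<Rightarrow> real \<Rightarrow> real \<times> real) \<Rightarrow> 'v \<Rightarrow> 'v \<times> 'v \<Rightarrow> 'v \<times> 'v \<Rightarrow> bool" where
  "in_left_of pos crv v e1 e2 \<longleftrightarrow> (\<exists>\<delta>>0. \<forall>s\<in>{0..<1}. \<forall>t\<in>{0..<1}.
     snd (crv e1 s) = snd (crv e2 t) \<and> snd (crv e1 s) > snd (pos v) - \<delta> \<longrightarrow>
     fst (crv e1 s) < fst (crv e2 t))"

definition left_out_edge where
  "left_out_edge E pos crv e \<longleftrightarrow> (\<exists>e'\<in>E. e' \<noteq> e \<and> fst e' = fst e \<and> out_left_of pos crv (fst e) e e')"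
definition right_out_edge where
  "right_out_edge E pos crv e \<longleftrightarrow> (\<exists>e'\<in>E. e' \<noteq> e \<and> fst e' = fst e \<and> out_left_of pos crv (fst e) e' e)"
definition left_in_edge where
  "left_in_edge E pos crv e \<longleftrightarrow> (\<exists>e'\<in>E. e' \<noteq> e \<and> snd e' = snd e \<and> in_left_of pos crv (snd e) e e')"
definition right_in_edge where
  "right_in_edge E pos crv e \<longleftrightarrow> (\<exists>e'\<in>E. e' \<noteq> e \<and> snd e' = snd e \<and> in_left_of pos crv (snd e) e' e)"

definition bad_edge where
  "bad_edge E pos crv e \<longleftrightarrow>
     (left_out_edge E pos crv e \<and> left_in_edge E pos crv e) \<or>
     (right_out_edge E pos crv e \<and> right_in_edge E pos crv e)"

end

theory Submission
  imports Defs
begin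

(* Let u = p_0, p_1, ..., p_k = v (k >= 2) be the detour.  Every edge is drawn y-monotone,
   hence is the graph of a continuous function x(y) of the height.  For a height y
   strictly between u and v covered by the detour edge (p_i, p_(i+1)), the horizontal offset
   between the edge (u, v) and that detour edge at height y is nonzero by planarity, and at the
   height of p_(i+1) the offsets to the two detour edges meeting there agree.  By connectedness
   the offset therefore has one sign along the whole detour: (u, v) lies strictly to one side of
   it, in particular of its first edge just above u and of its last edge just below v.  So (u, v)
   is on the same side (left or right) among the outgoing edges of u and the incoming edges of v. *)

definition upward_path :: "(real \<Rightarrow> real \<times> real) \<Rightarrow> bool" where
  "upward_path g \<longleftrightarrow> path g \<and> strict_mono_on {0..1} (\<lambda>t. snd (g t))"

(* Only meaningful for heights in [snd (g 0), snd (g 1)]; elsewhere the_inv_into is junk. *)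
definition height_inv :: "(real \<Rightarrow> real \<times> real) \<Rightarrow> real \<Rightarrow> real" where
  "height_inv g = the_inv_into {0..1} (\<lambda>t. snd (g t))"

definition x_at_height :: "(real \<Rightarrow> real \<times> real) \<Rightarrow> real \<Rightarrow> real" where
  "x_at_height g y = fst (g (height_inv g y))"

definition strictly_left_on ::
  "real set \<Rightarrow> (real \<Rightarrow> real \<times> real) \<Rightarrow> (real \<Rightarrow> real \<times> real) \<Rightarrow> bool" where
  "strictly_left_on Y g h \<longleftrightarrow> (\<forall>y\<in>Y. x_at_height g y < x_at_height h y)"

lemma strictly_left_on_subset:
  "strictly_left_on Y g h \<Longrightarrow> Z \<subseteq> Y \<Longrightarrow> strictly_left_on Z g h"
  by (auto simp: strictly_left_on_def)

lemma upward_path_height_less: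
  "upward_path g \<Longrightarrow> s \<in> {0..1} \<Longrightarrow> t \<in> {0..1} \<Longrightarrow> s < t \<Longrightarrow> snd (g s) < snd (g t)"
  unfolding upward_path_def by (blast dest: strict_mono_onD)

lemma height_inv_height:
  "upward_path g \<Longrightarrow> t \<in> {0..1} \<Longrightarrow> height_inv g (snd (g t)) = t"
  unfolding upward_path_def height_inv_def
  by (blast intro: the_inv_into_f_f strict_mono_on_imp_inj_on)

lemma x_at_height_height:
  "upward_path g \<Longrightarrow> t \<in> {0..1} \<Longrightarrow> x_at_height g (snd (g t)) = fst (g t)"
  by (simp add: x_at_height_def height_inv_height)

lemma upward_path_heights:
  assumes "upward_path g"
  shows "(\<lambda>t. snd (g t)) ` {0..1} = {snd (g 0)..snd (g 1)}"
proof
  show "(\<lambda>t. snd (g t)) ` {0..1} \<subseteq> {snd (g 0)..snd (g 1)}"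
  proof
    fix y assume "y \<in> (\<lambda>t. snd (g t)) ` {0..1}"
    then obtain t where "t \<in> {0..1}" "y = snd (g t)" by blast
    then show "y \<in> {snd (g 0)..snd (g 1)}"
      using assms strict_mono_on_leD[of "{0..1}" "\<lambda>t. snd (g t)"] by (auto simp: upward_path_def)
  qed
next
  have "continuous_on {0..1} (\<lambda>t. snd (g t))"
    using assms by (auto simp: upward_path_def path_def intro: continuous_intros)
  then show "{snd (g 0)..snd (g 1)} \<subseteq> (\<lambda>t. snd (g t)) ` {0..1}"
    using IVT'[of "\<lambda>t. snd (g t)" 0 _ 1] by fastforce
qed

lemma upward_path_at_height:
  assumes "upward_path g" "y \<in> {snd (g 0)..snd (g 1)}"
  obtains t where "t \<in> {0..1}" "snd (g t) = y"
  using upward_path_heights[OF assms(1)] assms(2) by (metis imageE)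

lemma continuous_on_x_at_height:
  assumes "upward_path g"
  shows "continuous_on {snd (g 0)..snd (g 1)} (x_at_height g)"
proof -
  have cg: "continuous_on {0..1} g"
    using assms by (simp add: upward_path_def path_def)
  have "continuous_on ((\<lambda>t. snd (g t)) ` {0..1}) (height_inv g)"
    using cg height_inv_height[OF assms]
    by (intro continuous_on_inv continuous_intros) auto
  then have "continuous_on {snd (g 0)..snd (g 1)} (height_inv g)"
    by (simp add: upward_path_heights[OF assms])
  moreover have "height_inv g ` {snd (g 0)..snd (g 1)} \<subseteq> {0..1}"
    using height_inv_height[OF assms] by (auto simp flip: upward_path_heights[OF assms])
  ultimately show ?thesis
    unfolding x_at_height_def by (intro continuous_intros continuous_on_compose2[OF cg])
qed

lemma connected_nonzero_same_sign:
  fixes f :: "'a::topological_space \<Rightarrow> real"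
  assumes "connected S" "continuous_on S f" "\<And>x. x \<in> S \<Longrightarrow> f x \<noteq> 0" "x \<in> S" "y \<in> S"
  shows "f x < 0 \<longleftrightarrow> f y < 0"
proof -
  have "connected (f ` S)"
    using assms(1,2) by (rule connected_continuous_image[rotated])
  then have no_sign_change: "\<not> (f a < 0 \<and> 0 < f b)" if "a \<in> S" "b \<in> S" for a b
  proof (intro notI)
    assume "f a < 0 \<and> 0 < f b"
    then have "0 \<in> f ` S"
      using \<open>connected (f ` S)\<close> that unfolding connected_iff_interval by force
    then show False
      using assms(3) by force
  qed
  show ?thesis
    using no_sign_change[of x y] no_sign_change[of y x] assms(3-5) by force
qed

lemma chain_same_sign:
  fixes D :: "nat \<Rightarrow> 'a::topological_space \<Rightarrow> real"
  assumes "\<And>i. i < k \<Longrightarrow> connected (J i)"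
    and "\<And>i. i < k \<Longrightarrow> continuous_on (J i) (D i)"
    and "\<And>i x. i < k \<Longrightarrow> x \<in> J i \<Longrightarrow> D i x \<noteq> 0"
    and "\<And>i. Suc i < k \<Longrightarrow> \<exists>x\<in>J i \<inter> J (Suc i). D i x = D (Suc i) x"
    and "x\<^sub>0 \<in> J 0"
  shows "i < k \<Longrightarrow> x \<in> J i \<Longrightarrow> D i x < 0 \<longleftrightarrow> D 0 x\<^sub>0 < 0"
proof (induction i arbitrary: x)
  case 0
  then show ?case
    using connected_nonzero_same_sign[of "J 0" "D 0" x x\<^sub>0] assms(1-3,5) by blast
next
  case (Suc i)
  then obtain w where w: "w \<in> J i" "w \<in> J (Suc i)" "D i w = D (Suc i) w"
    using assms(4) by blast
  have "D (Suc i) w < 0 \<longleftrightarrow> D 0 x\<^sub>0 < 0"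
    using Suc.IH[OF _ w(1)] w(3) Suc.prems(1) by simp
  moreover have "D (Suc i) x < 0 \<longleftrightarrow> D (Suc i) w < 0"
    using connected_nonzero_same_sign[of "J (Suc i)" "D (Suc i)" x w] assms(1-3) Suc.prems w(2)
    by blast
  ultimately show ?case
    by simp
qed

lemma upward_planar_drawing_edge:
  assumes "upward_planar_drawing V E pos crv" "(a, b) \<in> E"
  shows "upward_path (crv (a, b))" "crv (a, b) 0 = pos a" "crv (a, b) 1 = pos b"
  using assms unfolding upward_planar_drawing_def upward_path_def pathstart_def pathfinish_def
  by auto

lemma upward_planar_drawing_edge_height:
  assumes "upward_planar_drawing V E pos crv" "(a, b) \<in> E"
  shows "snd (pos a) < snd (pos b)"
  using upward_path_height_less[of "crv (a, b)" 0 1] upward_planar_drawing_edge[OF assms] by simp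

lemma upward_planar_drawing_edges_meet_at_ends:
  assumes "upward_planar_drawing V E pos crv" "E \<subseteq> V \<times> V" "e \<in> E" "e' \<in> E" "e \<noteq> e'"
    and "s \<in> {0<..<1}" "t \<in> {0..1}"
  shows "crv e s \<noteq> crv e' t"
proof
  assume meet: "crv e s = crv e' t"
  have inner: "\<forall>e\<in>E. \<forall>t\<in>{0<..<1}. crv e t \<notin> pos ` V"
    and cross: "\<forall>e\<in>E. \<forall>e'\<in>E. e \<noteq> e' \<longrightarrow> (\<forall>s\<in>{0..1}. \<forall>t\<in>{0..1}. crv e s = crv e' t \<longrightarrow>
        (\<exists>w\<in>{fst e, snd e} \<inter> {fst e', snd e'}. crv e s = pos w))"
    using assms(1) unfolding upward_planar_drawing_def by blast+
  have "s \<in> {0..1}"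
    using assms(6) by simp
  then obtain w where "w \<in> {fst e, snd e}" "crv e s = pos w"
    using cross assms(3-5,7) meet by blast
  moreover have "w \<in> V"
    using \<open>w \<in> {fst e, snd e}\<close> assms(2,3) by (cases e) auto
  ultimately show False
    using inner assms(3,6) by blast
qed

lemma x_at_height_of_distinct_edges:
  assumes dr: "upward_planar_drawing V E pos crv" and EV: "E \<subseteq> V \<times> V"
    and e: "(a, b) \<in> E" and e': "(a', b') \<in> E" and "(a, b) \<noteq> (a', b')"
    and y: "y \<in> {snd (pos a)<..<snd (pos b)}" "y \<in> {snd (pos a')..snd (pos b')}"
  shows "x_at_height (crv (a, b)) y \<noteq> x_at_height (crv (a', b')) y"
proof
  note g = upward_planar_drawing_edge[OF dr e] and h = upward_planar_drawing_edge[OF dr e']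
  have "y \<in> {snd (crv (a, b) 0)..snd (crv (a, b) 1)}"
    using y(1) g(2,3) by simp
  then obtain s where s: "s \<in> {0..1}" "snd (crv (a, b) s) = y"
    by (rule upward_path_at_height[OF g(1)])
  have "y \<in> {snd (crv (a', b') 0)..snd (crv (a', b') 1)}"
    using y(2) h(2,3) by simp
  then obtain t where t: "t \<in> {0..1}" "snd (crv (a', b') t) = y"
    by (rule upward_path_at_height[OF h(1)])
  have "s \<noteq> 0" "s \<noteq> 1"
    using s(2) y(1) g(2,3) by auto
  then have s_inner: "s \<in> {0<..<1}"
    using s(1) by auto
  assume "x_at_height (crv (a, b)) y = x_at_height (crv (a', b')) y"
  then have "crv (a, b) s = crv (a', b') t"
    using x_at_height_height[OF g(1) s(1)] x_at_height_height[OF h(1) t(1)] s(2) t(2)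
    by (simp add: prod_eq_iff)
  with upward_planar_drawing_edges_meet_at_ends[OF dr EV e e' _ s_inner t(1)] assms(5)
  show False by blast
qed

lemma dpath_length_ge_3:
  assumes "is_dpath V E p a b" "a \<noteq> b" "p \<noteq> [a, b]"
  shows "3 \<le> length p"
proof (rule ccontr)
  assume "\<not> 3 \<le> length p"
  then consider "p = []" | x where "p = [x]" | x y where "p = [x, y]"
    by (cases p; cases "tl p"; cases "tl (tl p)") auto
  then show False
    using assms unfolding is_dpath_def by cases auto
qed

lemma dpath_ends:
  assumes "is_dpath V E p a b"
  shows "p ! 0 = a" "p ! (length p - 1) = b"
  using assms unfolding is_dpath_def by (auto simp: hd_conv_nth last_conv_nth)

lemma dpath_edge:
  "is_dpath V E p a b \<Longrightarrow> Suc i < length p \<Longrightarrow> (p ! i, p ! Suc i) \<in> E"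
  unfolding is_dpath_def by blast

lemma dpath_heights_less:
  assumes dr: "upward_planar_drawing V E pos crv" and p: "is_dpath V E p a b"
  shows "i < j \<Longrightarrow> j < length p \<Longrightarrow> snd (pos (p ! i)) < snd (pos (p ! j))"
proof (induction j)
  case 0
  then show ?case by simp
next
  case (Suc j)
  have "snd (pos (p ! j)) < snd (pos (p ! Suc j))"
    using upward_planar_drawing_edge_height[OF dr dpath_edge[OF p Suc.prems(2)]] .
  then show ?case
    using Suc by (cases "i = j") auto
qed

lemma out_left_of_if_strictly_left:
  assumes dr: "upward_planar_drawing V E pos crv" and "(u, a) \<in> E" "(u, b) \<in> E"
    and "snd (pos u) < h" and left: "strictly_left_on {snd (pos u)<..<h} (crv (u, a)) (crv (u, b))"
  shows "out_left_of pos crv u (u, a) (u, b)"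
  unfolding out_left_of_def
proof (intro exI[of _ "h - snd (pos u)"] conjI ballI impI)
  show "h - snd (pos u) > 0"
    using \<open>snd (pos u) < h\<close> by simp
next
  fix s t
  assume s: "s \<in> {0<..1}" and t: "t \<in> {0<..1}"
    and h: "snd (crv (u, a) s) = snd (crv (u, b) t) \<and>
      snd (crv (u, a) s) < snd (pos u) + (h - snd (pos u))"
  note g = upward_planar_drawing_edge[OF dr \<open>(u, a) \<in> E\<close>]
    and g' = upward_planar_drawing_edge[OF dr \<open>(u, b) \<in> E\<close>]
  have "snd (pos u) < snd (crv (u, a) s)"
    using upward_path_height_less[OF g(1), of 0 s] s g(2) by simp
  then have "x_at_height (crv (u, a)) (snd (crv (u, a) s)) < x_at_height (crv (u, b)) (snd (crv (u, b) t))"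
    using left h unfolding strictly_left_on_def by simp
  then show "fst (crv (u, a) s) < fst (crv (u, b) t)"
    using x_at_height_height[OF g(1)] x_at_height_height[OF g'(1)] s t by simp
qed

lemma in_left_of_if_strictly_left:
  assumes dr: "upward_planar_drawing V E pos crv" and "(a, v) \<in> E" "(b, v) \<in> E"
    and "h < snd (pos v)" and left: "strictly_left_on {h<..<snd (pos v)} (crv (a, v)) (crv (b, v))"
  shows "in_left_of pos crv v (a, v) (b, v)"
  unfolding in_left_of_def
proof (intro exI[of _ "snd (pos v) - h"] conjI ballI impI)
  show "snd (pos v) - h > 0"
    using \<open>h < snd (pos v)\<close> by simp
next
  fix s t
  assume s: "s \<in> {0..<1}" and t: "t \<in> {0..<1}"
    and h: "snd (crv (a, v) s) = snd (crv (b, v) t) \<and>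
      snd (crv (a, v) s) > snd (pos v) - (snd (pos v) - h)"
  note g = upward_planar_drawing_edge[OF dr \<open>(a, v) \<in> E\<close>]
    and g' = upward_planar_drawing_edge[OF dr \<open>(b, v) \<in> E\<close>]
  have "snd (crv (a, v) s) < snd (pos v)"
    using upward_path_height_less[OF g(1), of s 1] s g(3) by simp
  then have "x_at_height (crv (a, v)) (snd (crv (a, v) s)) < x_at_height (crv (b, v)) (snd (crv (b, v) t))"
    using left h unfolding strictly_left_on_def by simp
  then show "fst (crv (a, v) s) < fst (crv (b, v) t)"
    using x_at_height_height[OF g(1)] x_at_height_height[OF g'(1)] s t by simp
qed

lemma transitive_edge_one_side_of_path:
  assumes dr: "upward_planar_drawing V E pos crv" and EV: "E \<subseteq> V \<times> V" and uv: "(u, v) \<in> E"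
    and p: "is_dpath V E p u v" "p \<noteq> [u, v]"
  defines "W i \<equiv> {snd (pos (p ! i))..snd (pos (p ! Suc i))} \<inter> {snd (pos u)<..<snd (pos v)}"
  shows "(\<forall>i. Suc i < length p \<longrightarrow> strictly_left_on (W i) (crv (u, v)) (crv (p ! i, p ! Suc i))) \<or>
    (\<forall>i. Suc i < length p \<longrightarrow> strictly_left_on (W i) (crv (p ! i, p ! Suc i)) (crv (u, v)))"
proof -
  define k where "k = length p - 1"
  define y where "y i = snd (pos (p ! i))" for i
  define D where "D i z = x_at_height (crv (u, v)) z - x_at_height (crv (p ! i, p ! Suc i)) z"
    for i z
  have "u \<noteq> v"
    using upward_planar_drawing_edge_height[OF dr uv] by auto
  then have len: "3 \<le> length p" "length p = Suc k"
    using dpath_length_ge_3[OF p(1) _ p(2)] by (auto simp: k_def)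
  have ends: "p ! 0 = u" "p ! k = v"
    using dpath_ends[OF p(1)] by (simp_all add: k_def)
  have dist: "distinct p"
    using p(1) by (simp add: is_dpath_def)
  have path_edge: "(p ! i, p ! Suc i) \<in> E" if "i < k" for i
    using dpath_edge[OF p(1)] that len(2) by simp
  have y_less: "y i < y j" if "i < j" "j \<le> k" for i j
    using dpath_heights_less[OF dr p(1) that(1)] that(2) len(2) by (simp add: y_def)
  have W_eq: "W i = {y i..y (Suc i)} \<inter> {y 0<..<y k}" for i
    using ends by (simp add: W_def y_def)
  have conn: "connected (W i)" for i
    unfolding W_def connected_iff_interval by auto
  have cont: "continuous_on (W i) (D i)" if "i < k" for i
  proof -
    note c = upward_planar_drawing_edge[OF dr uv]
      and g = upward_planar_drawing_edge[OF dr path_edge[OF that]]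
    have "continuous_on (W i) (x_at_height (crv (u, v)))"
      by (rule continuous_on_subset[OF continuous_on_x_at_height[OF c(1)]])
        (auto simp: W_def c(2,3))
    moreover have "continuous_on (W i) (x_at_height (crv (p ! i, p ! Suc i)))"
      by (rule continuous_on_subset[OF continuous_on_x_at_height[OF g(1)]])
        (auto simp: W_def g(2,3))
    ultimately show ?thesis
      unfolding D_def by (intro continuous_intros)
  qed
  have nz: "D i z \<noteq> 0" if "i < k" "z \<in> W i" for i z
  proof -
    have "(u, v) \<noteq> (p ! i, p ! Suc i)"
    proof
      assume "(u, v) = (p ! i, p ! Suc i)"
      then have "i = 0" "Suc i = k"
        using ends dist that(1) len(2) by (auto simp: nth_eq_iff_index_eq)
      then show False
        using len by simp
    qed
    then show ?thesis
      using x_at_height_of_distinct_edges[OF dr EV uv path_edge[OF that(1)]] that(2)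
      by (auto simp: D_def W_def)
  qed
  have link: "\<exists>z\<in>W i \<inter> W (Suc i). D i z = D (Suc i) z" if "Suc i < k" for i
  proof
    have "i < k"
      using that by simp
    note g = upward_planar_drawing_edge[OF dr path_edge[OF \<open>i < k\<close>]]
      and g' = upward_planar_drawing_edge[OF dr path_edge[OF that]]
    have "x_at_height (crv (p ! i, p ! Suc i)) (y (Suc i)) = fst (pos (p ! Suc i))"
      using x_at_height_height[OF g(1), of 1] g(3) by (simp add: y_def)
    moreover have "x_at_height (crv (p ! Suc i, p ! Suc (Suc i))) (y (Suc i)) = fst (pos (p ! Suc i))"
      using x_at_height_height[OF g'(1), of 0] g'(2) by (simp add: y_def)
    ultimately show "D i (y (Suc i)) = D (Suc i) (y (Suc i))"
      by (simp add: D_def)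
    show "y (Suc i) \<in> W i \<inter> W (Suc i)"
      using y_less[of 0 "Suc i"] y_less[of "Suc i" k] y_less[of i "Suc i"]
        y_less[of "Suc i" "Suc (Suc i)"] that
      by (auto simp: W_eq)
  qed
  define z\<^sub>0 where "z\<^sub>0 = (y 0 + y 1) / 2"
  have "z\<^sub>0 \<in> W 0"
    using y_less[of 0 1] y_less[of 1 k] len by (auto simp: W_eq z\<^sub>0_def)
  have sign: "D i z < 0 \<longleftrightarrow> D 0 z\<^sub>0 < 0" if "i < k" "z \<in> W i" for i z
    using conn cont nz link \<open>z\<^sub>0 \<in> W 0\<close> that by (rule chain_same_sign)
  show ?thesis
  proof (cases "D 0 z\<^sub>0 < 0")
    case True
    then have "D i z < 0" if "i < k" "z \<in> W i" for i z
      using sign[OF that] by blast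
    then show ?thesis
      unfolding strictly_left_on_def D_def by (simp add: len(2))
  next
    case False
    then have "D i z > 0" if "i < k" "z \<in> W i" for i z
      using sign[OF that] nz[OF that] by linarith
    then show ?thesis
      unfolding strictly_left_on_def D_def by (simp add: len(2))
  qed
qed

lemma transitive_edge_one_side_near_ends:
  assumes dr: "upward_planar_drawing V E pos crv" and EV: "E \<subseteq> V \<times> V" and uv: "(u, v) \<in> E"
    and p: "is_dpath V E p u v" "p \<noteq> [u, v]"
  obtains a b where "(u, a) \<in> E" "a \<noteq> v" "(b, v) \<in> E" "b \<noteq> u"
    "strictly_left_on {snd (pos u)<..<snd (pos a)} (crv (u, v)) (crv (u, a)) \<and>
       strictly_left_on {snd (pos b)<..<snd (pos v)} (crv (u, v)) (crv (b, v)) \<or>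
     strictly_left_on {snd (pos u)<..<snd (pos a)} (crv (u, a)) (crv (u, v)) \<and>
       strictly_left_on {snd (pos b)<..<snd (pos v)} (crv (b, v)) (crv (u, v))"
proof -
  define k where "k = length p - 1"
  define W where "W i = {snd (pos (p ! i))..snd (pos (p ! Suc i))} \<inter> {snd (pos u)<..<snd (pos v)}"
    for i
  have "u \<noteq> v"
    using upward_planar_drawing_edge_height[OF dr uv] by auto
  then have len: "3 \<le> length p" "length p = Suc k"
    using dpath_length_ge_3[OF p(1) _ p(2)] by (auto simp: k_def)
  have ends: "p ! 0 = u" "p ! k = v"
    using dpath_ends[OF p(1)] by (simp_all add: k_def)
  have dist: "distinct p"
    using p(1) by (simp add: is_dpath_def)
  have k_pred: "Suc (k - 1) = k"
    using len by simp
  have edges: "(u, p ! 1) \<in> E" "(p ! (k - 1), v) \<in> E"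
    using dpath_edge[OF p(1), of 0] dpath_edge[OF p(1), of "k - 1"] ends len k_pred by simp_all
  have "p ! 1 \<noteq> v" "p ! (k - 1) \<noteq> u"
    using nth_eq_iff_index_eq[OF dist, of 1 k] nth_eq_iff_index_eq[OF dist, of "k - 1" 0] ends len
    by simp_all
  have "snd (pos (p ! 1)) < snd (pos v)" "snd (pos u) < snd (pos (p ! (k - 1)))"
    using dpath_heights_less[OF dr p(1), of 1 k]
      dpath_heights_less[OF dr p(1), of 0 "k - 1"] ends len by simp_all
  then have windows: "{snd (pos u)<..<snd (pos (p ! 1))} \<subseteq> W 0"
      "{snd (pos (p ! (k - 1)))<..<snd (pos v)} \<subseteq> W (k - 1)"
    using ends k_pred by (auto simp: W_def)
  note choose_ends = that[OF edges(1) \<open>p ! 1 \<noteq> v\<close> edges(2) \<open>p ! (k - 1) \<noteq> u\<close>]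
  from transitive_edge_one_side_of_path[OF dr EV uv p, folded W_def]
  consider
    (left) "\<forall>i. Suc i < length p \<longrightarrow> strictly_left_on (W i) (crv (u, v)) (crv (p ! i, p ! Suc i))" |
    (right) "\<forall>i. Suc i < length p \<longrightarrow> strictly_left_on (W i) (crv (p ! i, p ! Suc i)) (crv (u, v))"
    by blast
  then show thesis
  proof cases
    case left
    then have "strictly_left_on (W 0) (crv (u, v)) (crv (u, p ! 1))"
      "strictly_left_on (W (k - 1)) (crv (u, v)) (crv (p ! (k - 1), v))"
      using left[rule_format, of 0] left[rule_format, of "k - 1"] ends len k_pred by simp_all
    with windows show thesis
      by (intro choose_ends disjI1 conjI) (auto elim: strictly_left_on_subset)
  next
    case right
    then have "strictly_left_on (W 0) (crv (u, p ! 1)) (crv (u, v))"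
      "strictly_left_on (W (k - 1)) (crv (p ! (k - 1), v)) (crv (u, v))"
      using right[rule_format, of 0] right[rule_format, of "k - 1"] ends len k_pred by simp_all
    with windows show thesis
      by (intro choose_ends disjI2 conjI) (auto elim: strictly_left_on_subset)
  qed
qed

theorem mainTheorem4:
  fixes V :: "'v set" and E :: "('v \<times> 'v) set" and u v :: 'v
  assumes "upward_planar V E"
    and "\<forall>x\<in>V. indeg E x \<le> 2 \<and> outdeg E x \<le> 2"
    and "(u, v) \<in> E"
    and "\<exists>p. is_dpath V E p u v \<and> p \<noteq> [u, v]"
  shows "\<forall>pos crv. upward_planar_drawing V E pos crv \<longrightarrow> bad_edge E pos crv (u, v)"
proof (intro allI impI)
  fix pos crv
  assume dr: "upward_planar_drawing V E pos crv"
  have EV: "E \<subseteq> V \<times> V"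
    using assms(1) by (simp add: upward_planar_def)
  obtain p where p: "is_dpath V E p u v" "p \<noteq> [u, v]"
    using assms(4) by blast
  obtain a b where ua: "(u, a) \<in> E" "a \<noteq> v" and bv: "(b, v) \<in> E" "b \<noteq> u"
    and side: "strictly_left_on {snd (pos u)<..<snd (pos a)} (crv (u, v)) (crv (u, a)) \<and>
       strictly_left_on {snd (pos b)<..<snd (pos v)} (crv (u, v)) (crv (b, v)) \<or>
     strictly_left_on {snd (pos u)<..<snd (pos a)} (crv (u, a)) (crv (u, v)) \<and>
       strictly_left_on {snd (pos b)<..<snd (pos v)} (crv (b, v)) (crv (u, v))"
    using transitive_edge_one_side_near_ends[OF dr EV assms(3) p] .
  have "snd (pos u) < snd (pos a)" "snd (pos b) < snd (pos v)"
    using upward_planar_drawing_edge_height[OF dr ua(1)] upward_planar_drawing_edge_height[OF dr bv(1)]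
    by simp_all
  then have "out_left_of pos crv u (u, v) (u, a) \<and> in_left_of pos crv v (u, v) (b, v) \<or>
      out_left_of pos crv u (u, a) (u, v) \<and> in_left_of pos crv v (b, v) (u, v)"
    using side out_left_of_if_strictly_left[OF dr assms(3) ua(1)]
      out_left_of_if_strictly_left[OF dr ua(1) assms(3)]
      in_left_of_if_strictly_left[OF dr assms(3) bv(1)] in_left_of_if_strictly_left[OF dr bv(1) assms(3)]
    by blast
  then show "bad_edge E pos crv (u, v)"
    using ua bv assms(3)
    unfolding bad_edge_def left_out_edge_def left_in_edge_def right_out_edge_def right_in_edge_def
    by force
qed

end
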